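(* Let $A_1,\dots,A_L$ be independent adjacency matrices generated by a multi-layer SBM (as in the context) satisfying $\frac{\log(L+n)}{pnL^{1/2}}\lesssim\rho\lesssim\frac{1}{pn}$, and let $\tilde A_l$ be the sparsified matrices with sampling probability $p$. Then the following hold simultaneously with probability larger than $1-O((L+n)^{-c})$ for some positive constant $c$: (i) $\max_{l,i}\tilde d_{l,i}\lesssim\log(L+n)$; (ii) $\max_i\sum_{l=1}^L\tilde d_{l,i}\lesssim Ln\rho p$; (iii) $\big\|\sum_{l=1}^L\tilde A_l^2\big\|_2\lesssim Ln\rho/p$.
   Context: Multi-layer SBM: each node $i\in[n]$ has a label $g_i\in[K]$ ($K$ fixed); for each layer $l$, $B_l=\rho B_{l,0}\in[0,1]^{K\times K}$ is symmetric with $B_{l,0}$ having nonnegative entries bounded by an absolute constant. $A_l\in\{0,1\}^{n\times n}$ is symmetric with $A_{l,ii}=0$ and $A_{l,ij}$ ($i<j$) independent $\mathrm{Bernoulli}(B_{l,g_ig_j})$. Sparsification with probability $p\in(0,1]$: for each $l$ and pair $i<j$, independently, with probability $p$ set $\tilde A_{l,ij}=A_{l,ij}/p$, otherwise $0$; $\tilde A_{l,ji}=\tilde A_{l,ij}$, $\tilde A_{l,ii}=0$. $\tilde d_{l,i}=\#\{j:\tilde A_{l,ij}=1/p\}$. $\|\cdot\|_2$ is the spectral norm; $f\lesssim g$ means $f\le cg$ for a constant $c>0$ independent of $n,L,p,\rho$. *)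

theory Defs
  imports "HOL-Probability.Probability"
begin

text \<open>An outcome
  \<omega> assigns to every layer l < L and pair i < j < n a pair of booleans
  (edge indicator A_{l,ij}, sparsification-keep indicator).\<close>

definition sbm_idx :: "nat \<Rightarrow> nat \<Rightarrow> (nat \<times> nat \<times> nat) set" where
  "sbm_idx L n = {(l, i, j). l < L \<and> i < j \<and> j < n}"

definition sbm_sparse_pmf ::
  "nat \<Rightarrow> nat \<Rightarrow> (nat \<Rightarrow> nat) \<Rightarrow> (nat \<Rightarrow> nat \<Rightarrow> nat \<Rightarrow> real) \<Rightarrow> real
   \<Rightarrow> (nat \<times> nat \<times> nat \<Rightarrow> bool \<times> bool) pmf" where
  "sbm_sparse_pmf L n g Blay p =
     Pi_pmf (sbm_idx L n) (False, False)
       (\<lambda>(l, i, j). pair_pmf (bernoulli_pmf (Blay l (g i) (g j))) (bernoulli_pmf p))"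

definition sparse_adj ::
  "real \<Rightarrow> (nat \<times> nat \<times> nat \<Rightarrow> bool \<times> bool) \<Rightarrow> nat \<Rightarrow> nat \<Rightarrow> nat \<Rightarrow> real" where
  "sparse_adj p \<omega> l i j =
     (if i = j then 0
      else (let (a, s) = \<omega> (l, min i j, max i j) in
            if s then (if a then 1 / p else 0) else 0))"

definition sparse_deg ::
  "nat \<Rightarrow> real \<Rightarrow> (nat \<times> nat \<times> nat \<Rightarrow> bool \<times> bool) \<Rightarrow> nat \<Rightarrow> nat \<Rightarrow> nat" where
  "sparse_deg n p \<omega> l i = card {j. j < n \<and> sparse_adj p \<omega> l i j = 1 / p}"

definition spec_norm :: "nat \<Rightarrow> (nat \<Rightarrow> nat \<Rightarrow> real) \<Rightarrow> real" where
  "spec_norm n M = Sup {sqrt (\<Sum>i<n. (\<Sum>j<n. M i j * x j)\<^sup>2) | x.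
                         (\<Sum>j<n. (x j)\<^sup>2) \<le> 1}"

definition mat_mult_n :: "nat \<Rightarrow> (nat \<Rightarrow> nat \<Rightarrow> real) \<Rightarrow> (nat \<Rightarrow> nat \<Rightarrow> real) \<Rightarrow> nat \<Rightarrow> nat \<Rightarrow> real" where
  "mat_mult_n n M N = (\<lambda>i j. \<Sum>k<n. M i k * N k j)"

end

theory Submission
  imports Defs
begin

text \<open>Let \<open>X\<^sub>s\<close> indicate that the pair \<open>s = (l, i, j)\<close> carries an edge that survives
  the sparsification: these are independent Bernoulli variables of mean at most
  \<open>Q = b \<rho> p\<close>, and \<open>E exp (u X\<^sub>s) \<le> exp (2 u Q)\<close> for \<open>0 \<le> u \<le> 1\<close>. A degree, and the
  sum of the degrees of a vertex over the layers, are sums of distinct \<open>X\<^sub>s\<close> with means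
  \<open>O(1)\<close> and \<open>O(L n \<rho> p)\<close>, so Chernoff's bound and a union bound give (i) and (ii).

  For (iii), the spectral norm of the symmetric nonnegative matrix \<open>\<Sum>\<^sub>l A\<^sub>l\<^sup>2\<close> is at
  most its largest row sum, which is \<open>1 / p\<^sup>2\<close> times the summed degree of \<open>i\<close> plus the
  number of two-paths \<open>i - k - j\<close> with \<open>j \<noteq> i\<close>. Conditionally on the edges not incident
  to \<open>i\<close>, that number is a sum of independent \<open>X\<^sub>s\<close> weighted by the degrees of the middle
  vertices (truncated at the level \<open>T \<approx> log (L + n)\<close> from (i)); the conditional Chernoff
  bound leaves the exponential moment of a multiple of the number of edges avoiding \<open>i\<close>
  (each is counted twice among the middle-vertex degrees), again a sum of independent
  indicators. The resulting bound \<open>O(L n \<rho> p)\<close> holds with high probability because the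
  hypotheses on \<open>\<rho>\<close> make \<open>L n \<rho> p\<close> at least of order \<open>log\<^sup>2 (L + n)\<close>.\<close>

section \<open>Chernoff bounds for independent indicators\<close>

lemma exp_le_one_plus_two_mult:
  fixes w :: real
  assumes "0 \<le> w" "w \<le> 1"
  shows "exp w \<le> 1 + 2 * w"
proof -
  have "exp w \<le> 1 + w + w\<^sup>2" by (rule exp_bound[OF assms])
  also have "w\<^sup>2 \<le> w" using assms by (simp add: power2_eq_square mult_left_le_one_le)
  finally show ?thesis by simp
qed

lemma nn_integral_exp_indicator_le:
  fixes M :: "'b pmf" and u Q :: real
  assumes E: "measure_pmf.prob M {v. E v} \<le> Q" and u: "0 \<le> u" "u \<le> 1"
  shows "(\<integral>\<^sup>+v. ennreal (exp (u * of_bool (E v))) \<partial>M) \<le> ennreal (exp (2 * u * Q))"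
proof -
  have pos: "0 \<le> exp u - 1" using u by simp
  have "(\<integral>\<^sup>+v. ennreal (exp (u * of_bool (E v))) \<partial>M)
      = (\<integral>\<^sup>+v. 1 + ennreal (exp u - 1) * indicator {v. E v} v \<partial>M)"
  proof (intro nn_integral_cong)
    have "ennreal (exp u) = ennreal 1 + ennreal (exp u - 1)"
      using pos ennreal_plus[of 1 "exp u - 1"] by simp
    then show "ennreal (exp (u * of_bool (E v))) = 1 + ennreal (exp u - 1) * indicator {v. E v} v"
      for v by (cases "E v") auto
  qed
  also have "\<dots> = ennreal (1 + (exp u - 1) * measure_pmf.prob M {v. E v})"
    using pos by (simp add: nn_integral_add nn_integral_cmult_indicator measure_pmf.emeasure_space_1
        measure_pmf.emeasure_eq_measure ennreal_mult ennreal_plus)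
  also have "\<dots> \<le> ennreal (exp (2 * u * Q))"
  proof (rule ennreal_leI)
    have "(exp u - 1) * measure_pmf.prob M {v. E v} \<le> (2 * u) * Q"
      using exp_le_one_plus_two_mult[OF u] E u by (intro mult_mono) auto
    then show "1 + (exp u - 1) * measure_pmf.prob M {v. E v} \<le> exp (2 * u * Q)"
      using exp_ge_add_one_self[of "2 * u * Q"] by linarith
  qed
  finally show ?thesis .
qed

lemma ennreal_prod_mono:
  fixes f g :: "'a \<Rightarrow> ennreal"
  shows "(\<And>i. i \<in> A \<Longrightarrow> f i \<le> g i) \<Longrightarrow> prod f A \<le> prod g A"
  by (induction A rule: infinite_finite_induct) (auto intro: mult_mono)

lemma nn_integral_exp_sum_Pi_pmf_le:
  fixes P :: "'a \<Rightarrow> 'b pmf" and w :: "'a \<Rightarrow> real"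
  assumes fin: "finite I"
    and w: "\<And>s. s \<in> I \<Longrightarrow> 0 \<le> w s \<and> w s \<le> 1"
    and E: "\<And>s. s \<in> I \<Longrightarrow> measure_pmf.prob (P s) {v. E v} \<le> Q"
  shows "(\<integral>\<^sup>+\<omega>. ennreal (exp (\<Sum>s\<in>I. w s * of_bool (E (\<omega> s)))) \<partial>Pi_pmf I dflt P)
      \<le> ennreal (exp (2 * Q * (\<Sum>s\<in>I. w s)))"
proof -
  have "(\<integral>\<^sup>+\<omega>. ennreal (exp (\<Sum>s\<in>I. w s * of_bool (E (\<omega> s)))) \<partial>Pi_pmf I dflt P)
      = (\<integral>\<^sup>+\<omega>. (\<Prod>s\<in>I. ennreal (exp (w s * of_bool (E (\<omega> s))))) \<partial>Pi_pmf I dflt P)"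
    by (simp add: exp_sum[OF fin] prod_ennreal)
  also have "\<dots> = (\<Prod>s\<in>I. \<integral>\<^sup>+v. ennreal (exp (w s * of_bool (E v))) \<partial>P s)"
    by (rule nn_integral_prod_Pi_pmf[OF fin])
  also have "\<dots> \<le> (\<Prod>s\<in>I. ennreal (exp (2 * w s * Q)))"
    using w E by (intro ennreal_prod_mono nn_integral_exp_indicator_le) auto
  also have "\<dots> = ennreal (exp (2 * Q * (\<Sum>s\<in>I. w s)))"
  proof -
    have "2 * Q * (\<Sum>s\<in>I. w s) = (\<Sum>s\<in>I. 2 * w s * Q)"
      by (simp add: sum_distrib_left sum_distrib_right mult_ac)
    then show ?thesis by (simp add: exp_sum[OF fin] prod_ennreal)
  qed
  finally show ?thesis .
qed

lemma nn_integral_exp_sum_Pi_pmf_reindex_le: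
  fixes P :: "'a \<Rightarrow> 'b pmf" and w :: "'j \<Rightarrow> real" and \<phi> :: "'j \<Rightarrow> 'a"
  assumes fin: "finite I" and finJ: "finite J" and inj: "inj_on \<phi> J" and sub: "\<phi> ` J \<subseteq> I"
    and w: "\<And>j. j \<in> J \<Longrightarrow> 0 \<le> w j \<and> w j \<le> 1"
    and E: "\<And>s. s \<in> I \<Longrightarrow> measure_pmf.prob (P s) {v. E v} \<le> Q"
  shows "(\<integral>\<^sup>+\<omega>. ennreal (exp (\<Sum>j\<in>J. w j * of_bool (E (\<omega> (\<phi> j))))) \<partial>Pi_pmf I dflt P)
      \<le> ennreal (exp (2 * Q * (\<Sum>j\<in>J. w j)))"
proof -
  define w' where "w' s = (if s \<in> \<phi> ` J then w (the_inv_into J \<phi> s) else 0)" for s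
  have reindex: "(\<Sum>s\<in>I. w' s * h s) = (\<Sum>j\<in>J. w j * h (\<phi> j))" for h :: "'a \<Rightarrow> real"
  proof -
    have "(\<Sum>s\<in>I. w' s * h s) = (\<Sum>s\<in>\<phi> ` J. w' s * h s)"
      using sub fin by (intro sum.mono_neutral_right) (auto simp: w'_def)
    also have "\<dots> = (\<Sum>j\<in>J. w' (\<phi> j) * h (\<phi> j))"
      by (rule sum.reindex[OF inj, unfolded comp_def])
    also have "\<dots> = (\<Sum>j\<in>J. w j * h (\<phi> j))"
      using inj by (intro sum.cong) (auto simp: w'_def the_inv_into_f_f)
    finally show ?thesis .
  qed
  have "(\<integral>\<^sup>+\<omega>. ennreal (exp (\<Sum>s\<in>I. w' s * of_bool (E (\<omega> s)))) \<partial>Pi_pmf I dflt P)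
      \<le> ennreal (exp (2 * Q * (\<Sum>s\<in>I. w' s)))"
    by (rule nn_integral_exp_sum_Pi_pmf_le[OF fin _ E])
       (use w inj in \<open>auto simp: w'_def the_inv_into_f_f\<close>)
  moreover have "(\<Sum>s\<in>I. w' s) = (\<Sum>j\<in>J. w j)"
    using reindex[of "\<lambda>_. 1"] by simp
  ultimately show ?thesis by (simp add: reindex)
qed

lemma prob_ge_le_exp_nn_integral:
  fixes M :: "'b pmf" and X :: "'b \<Rightarrow> real"
  assumes mgf: "(\<integral>\<^sup>+\<omega>. ennreal (exp (X \<omega>)) \<partial>M) \<le> ennreal B" and B: "0 \<le> B"
  shows "measure_pmf.prob M {\<omega>. a \<le> X \<omega>} \<le> exp (- a) * B"
proof -
  have "ennreal (measure_pmf.prob M {\<omega>. a \<le> X \<omega>}) = emeasure M {\<omega>\<in>UNIV. X \<omega> \<ge> a}"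
    by (simp add: measure_pmf.emeasure_eq_measure)
  also have "\<dots> \<le> ennreal (exp (- 1 * a)) * (\<integral>\<^sup>+\<omega>. ennreal (exp (1 * X \<omega>)) * indicator UNIV \<omega> \<partial>M)"
    by (rule Chernoff_ineq_nn_integral_ge) auto
  also have "\<dots> = ennreal (exp (- a)) * (\<integral>\<^sup>+\<omega>. ennreal (exp (X \<omega>)) \<partial>M)"
    by simp
  also have "\<dots> \<le> ennreal (exp (- a)) * ennreal B"
    using mgf by (intro mult_left_mono) auto
  also have "\<dots> = ennreal (exp (- a) * B)"
    using B by (simp add: ennreal_mult')
  finally show ?thesis using B by (simp add: ennreal_le_iff)
qed

lemma prob_sum_indicators_ge_le:
  fixes P :: "'a \<Rightarrow> 'b pmf" and \<phi> :: "'j \<Rightarrow> 'a"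
  assumes fin: "finite I" and finJ: "finite J" and inj: "inj_on \<phi> J" and sub: "\<phi> ` J \<subseteq> I"
    and E: "\<And>s. s \<in> I \<Longrightarrow> measure_pmf.prob (P s) {v. E v} \<le> Q"
  shows "measure_pmf.prob (Pi_pmf I dflt P) {\<omega>. a \<le> (\<Sum>j\<in>J. (of_bool (E (\<omega> (\<phi> j))) :: real))}
      \<le> exp (- a / 2 + Q * card J)"
proof -
  have halve: "{\<omega>. a / 2 \<le> (\<Sum>j\<in>J. 1/2 * of_bool (E (\<omega> (\<phi> j))))}
      = {\<omega>. a \<le> (\<Sum>j\<in>J. (of_bool (E (\<omega> (\<phi> j))) :: real))}"
    by (simp add: sum_divide_distrib[symmetric])
  have mgf: "(\<integral>\<^sup>+\<omega>. ennreal (exp (\<Sum>j\<in>J. 1/2 * of_bool (E (\<omega> (\<phi> j))))) \<partial>Pi_pmf I dflt P)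
      \<le> ennreal (exp (2 * Q * (\<Sum>j\<in>J. 1/2)))"
    by (rule nn_integral_exp_sum_Pi_pmf_reindex_le[OF fin finJ inj sub]) (use E in auto)
  have "measure_pmf.prob (Pi_pmf I dflt P)
      {\<omega>. a / 2 \<le> (\<Sum>j\<in>J. 1/2 * of_bool (E (\<omega> (\<phi> j))))}
      \<le> exp (- (a / 2)) * exp (2 * Q * (\<Sum>j\<in>J. 1/2))"
    by (rule prob_ge_le_exp_nn_integral[OF mgf]) simp
  then show ?thesis unfolding halve by (simp add: exp_add[symmetric])
qed

lemma measure_pmf_UN_le_card_mult:
  fixes M :: "'b pmf" and \<epsilon> :: real
  assumes "finite X" and "\<And>x. x \<in> X \<Longrightarrow> measure_pmf.prob M (B x) \<le> \<epsilon>"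
  shows "measure_pmf.prob M (\<Union>x\<in>X. B x) \<le> card X * \<epsilon>"
proof -
  have "measure_pmf.prob M (\<Union>x\<in>X. B x) \<le> (\<Sum>x\<in>X. measure_pmf.prob M (B x))"
    using assms(1) by (intro measure_pmf.finite_measure_subadditive_finite) auto
  also have "\<dots> \<le> card X * \<epsilon>"
    using assms by (intro sum_bounded_above) auto
  finally show ?thesis .
qed

lemma nn_integral_exp_sum_Pi_pmf_cond_le:
  fixes P :: "'a \<Rightarrow> 'b pmf" and m :: "'a \<Rightarrow> ('a \<Rightarrow> 'b) \<Rightarrow> real"
  assumes fin: "finite I" and AI: "A \<subseteq> I"
    and outside: "\<And>s \<omega> \<omega>'. s \<in> A \<Longrightarrow> (\<forall>x\<in>I - A. \<omega> x = \<omega>' x) \<Longrightarrow> m s \<omega> = m s \<omega>'"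
    and m: "\<And>s \<omega>. s \<in> A \<Longrightarrow> 0 \<le> m s \<omega> \<and> m s \<omega> \<le> 1"
    and E: "\<And>s. s \<in> I \<Longrightarrow> measure_pmf.prob (P s) {v. E v} \<le> Q"
  shows "(\<integral>\<^sup>+\<omega>. ennreal (exp (\<Sum>s\<in>A. m s \<omega> * of_bool (E (\<omega> s)))) \<partial>Pi_pmf I dflt P)
      \<le> (\<integral>\<^sup>+\<omega>. ennreal (exp (2 * Q * (\<Sum>s\<in>A. m s \<omega>))) \<partial>Pi_pmf I dflt P)"
proof -
  define B where "B = I - A"
  have finA: "finite A" using fin AI finite_subset by blast
  have finB: "finite B" using fin by (simp add: B_def)
  define merge where "merge = (\<lambda>(f::'a \<Rightarrow> 'b, g::'a \<Rightarrow> 'b) x. if x \<in> B then f x else g x)"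
  have split: "Pi_pmf I dflt P = map_pmf merge (pair_pmf (Pi_pmf B dflt P) (Pi_pmf A dflt P))"
  proof -
    have IBA: "I = B \<union> A" using AI by (auto simp: B_def)
    show ?thesis unfolding IBA merge_def by (rule Pi_pmf_union[OF finB finA]) (auto simp: B_def)
  qed
  have merge_A: "merge (f, g) s = g s" if "s \<in> A" for f g s
    using that by (auto simp: merge_def B_def)
  have m_merge: "m s (merge (f, g)) = m s f" if "s \<in> A" for f g s
    using that by (intro outside) (auto simp: merge_def B_def)
  \<comment> \<open>conditionally on the coordinates outside \<open>A\<close>, the weights are constants\<close>
  have "(\<integral>\<^sup>+\<omega>. ennreal (exp (\<Sum>s\<in>A. m s \<omega> * of_bool (E (\<omega> s)))) \<partial>Pi_pmf I dflt P)
     = (\<integral>\<^sup>+f. \<integral>\<^sup>+g. ennreal (exp (\<Sum>s\<in>A. m s f * of_bool (E (g s)))) \<partial>Pi_pmf A dflt P \<partial>Pi_pmf B dflt P)"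
    unfolding split by (simp add: nn_integral_pair_pmf' merge_A m_merge cong: sum.cong)
  also have "\<dots> \<le> (\<integral>\<^sup>+f. ennreal (exp (2 * Q * (\<Sum>s\<in>A. m s f))) \<partial>Pi_pmf B dflt P)"
    by (intro nn_integral_mono nn_integral_exp_sum_Pi_pmf_le[OF finA] m E) (use AI in auto)
  also have "\<dots> = (\<integral>\<^sup>+\<omega>. ennreal (exp (2 * Q * (\<Sum>s\<in>A. m s \<omega>))) \<partial>Pi_pmf I dflt P)"
    unfolding split
    by (simp add: nn_integral_pair_pmf' m_merge measure_pmf.emeasure_space_1 cong: sum.cong)
  finally show ?thesis .
qed

section \<open>Schur's test for the spectral norm\<close>

lemma weighted_Cauchy_Schwarz:
  fixes a y :: "'a \<Rightarrow> real"
  shows "(\<Sum>j\<in>S. a j * y j)\<^sup>2 \<le> (\<Sum>j\<in>S. \<bar>a j\<bar>) * (\<Sum>j\<in>S. \<bar>a j\<bar> * (y j)\<^sup>2)"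
proof -
  have "(\<Sum>j\<in>S. a j * y j)\<^sup>2 \<le> (\<Sum>j\<in>S. \<bar>a j * y j\<bar>)\<^sup>2"
    using power_mono[OF sum_abs abs_ge_zero, of "\<lambda>j. a j * y j" S 2] by simp
  also have "(\<Sum>j\<in>S. \<bar>a j * y j\<bar>) = (\<Sum>j\<in>S. sqrt \<bar>a j\<bar> * (sqrt \<bar>a j\<bar> * \<bar>y j\<bar>))"
    by (intro sum.cong) (auto simp: abs_mult real_sqrt_mult[symmetric])
  also have "(\<dots>)\<^sup>2 \<le> (\<Sum>j\<in>S. (sqrt \<bar>a j\<bar>)\<^sup>2) * (\<Sum>j\<in>S. (sqrt \<bar>a j\<bar> * \<bar>y j\<bar>)\<^sup>2)"
    by (rule Cauchy_Schwarz_ineq_sum)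
  also have "\<dots> = (\<Sum>j\<in>S. \<bar>a j\<bar>) * (\<Sum>j\<in>S. \<bar>a j\<bar> * (y j)\<^sup>2)"
    by (simp add: power_mult_distrib)
  finally show ?thesis .
qed

lemma sum_sq_mat_vec_le_row_sum:
  fixes M :: "nat \<Rightarrow> nat \<Rightarrow> real"
  assumes sym: "\<And>i j. i < n \<Longrightarrow> j < n \<Longrightarrow> M i j = M j i"
    and row: "\<And>i. i < n \<Longrightarrow> (\<Sum>j<n. \<bar>M i j\<bar>) \<le> R" and R: "0 \<le> R"
  shows "(\<Sum>i<n. (\<Sum>j<n. M i j * x j)\<^sup>2) \<le> R\<^sup>2 * (\<Sum>j<n. (x j)\<^sup>2)"
proof -
  have "(\<Sum>i<n. (\<Sum>j<n. M i j * x j)\<^sup>2) \<le> (\<Sum>i<n. R * (\<Sum>j<n. \<bar>M i j\<bar> * (x j)\<^sup>2))"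
  proof (intro sum_mono)
    fix i assume i: "i \<in> {..<n}"
    have "(\<Sum>j<n. M i j * x j)\<^sup>2 \<le> (\<Sum>j<n. \<bar>M i j\<bar>) * (\<Sum>j<n. \<bar>M i j\<bar> * (x j)\<^sup>2)"
      by (rule weighted_Cauchy_Schwarz)
    also have "\<dots> \<le> R * (\<Sum>j<n. \<bar>M i j\<bar> * (x j)\<^sup>2)"
      using row i by (intro mult_right_mono sum_nonneg) auto
    finally show "(\<Sum>j<n. M i j * x j)\<^sup>2 \<le> R * (\<Sum>j<n. \<bar>M i j\<bar> * (x j)\<^sup>2)" .
  qed
  also have "\<dots> = R * (\<Sum>j<n. (x j)\<^sup>2 * (\<Sum>i<n. \<bar>M j i\<bar>))"
  proof -
    have "(\<Sum>i<n. \<Sum>j<n. \<bar>M i j\<bar> * (x j)\<^sup>2) = (\<Sum>j<n. \<Sum>i<n. \<bar>M i j\<bar> * (x j)\<^sup>2)"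
      by (rule sum.swap)
    also have "\<dots> = (\<Sum>j<n. (x j)\<^sup>2 * (\<Sum>i<n. \<bar>M j i\<bar>))"
      by (auto simp: sum_distrib_left sym mult.commute intro!: sum.cong)
    finally show ?thesis by (simp only: sum_distrib_left[symmetric])
  qed
  also have "\<dots> \<le> R * (\<Sum>j<n. (x j)\<^sup>2 * R)"
    using R row by (intro mult_left_mono sum_mono mult_left_mono) auto
  also have "\<dots> = R\<^sup>2 * (\<Sum>j<n. (x j)\<^sup>2)"
    by (simp add: sum_distrib_left sum_distrib_right power2_eq_square mult_ac)
  finally show ?thesis .
qed

lemma spec_norm_le_row_sum:
  fixes M :: "nat \<Rightarrow> nat \<Rightarrow> real"
  assumes sym: "\<And>i j. i < n \<Longrightarrow> j < n \<Longrightarrow> M i j = M j i"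
    and row: "\<And>i. i < n \<Longrightarrow> (\<Sum>j<n. \<bar>M i j\<bar>) \<le> R" and R: "0 \<le> R"
  shows "spec_norm n M \<le> R"
  unfolding spec_norm_def
proof (rule cSup_least)
  show "{sqrt (\<Sum>i<n. (\<Sum>j<n. M i j * x j)\<^sup>2) | x. (\<Sum>j<n. (x j)\<^sup>2) \<le> 1} \<noteq> {}"
    by (auto intro!: exI[of _ "\<lambda>_. 0"])
next
  fix z assume "z \<in> {sqrt (\<Sum>i<n. (\<Sum>j<n. M i j * x j)\<^sup>2) | x. (\<Sum>j<n. (x j)\<^sup>2) \<le> 1}"
  then obtain x where z: "z = sqrt (\<Sum>i<n. (\<Sum>j<n. M i j * x j)\<^sup>2)"
    and x: "(\<Sum>j<n. (x j)\<^sup>2) \<le> 1"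
    by blast
  have "(\<Sum>i<n. (\<Sum>j<n. M i j * x j)\<^sup>2) \<le> R\<^sup>2 * (\<Sum>j<n. (x j)\<^sup>2)"
    by (rule sum_sq_mat_vec_le_row_sum[OF sym row R])
  also have "\<dots> \<le> R\<^sup>2" using x by (intro mult_left_le) auto
  finally have "z \<le> sqrt (R\<^sup>2)" unfolding z by (rule real_sqrt_le_mono)
  then show "z \<le> R" using R by simp
qed

section \<open>The sparsified multi-layer SBM\<close>

lemma sum_sum_min_max_eq_double:
  fixes f :: "nat \<Rightarrow> nat \<Rightarrow> real"
  assumes "finite V"
  shows "(\<Sum>k\<in>V. \<Sum>j\<in>V - {k}. f (min k j) (max k j))
       = 2 * (\<Sum>(a, c)\<in>Sigma V (\<lambda>a. {c\<in>V. a < c}). f a c)"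
proof -
  have split: "(\<Sum>j\<in>V - {k}. f (min k j) (max k j))
      = (\<Sum>j\<in>{j\<in>V. k < j}. f k j) + (\<Sum>j\<in>{j\<in>V. j < k}. f j k)" for k
  proof -
    have "V - {k} = {j\<in>V. k < j} \<union> {j\<in>V. j < k}" by auto
    then have "(\<Sum>j\<in>V - {k}. f (min k j) (max k j))
        = (\<Sum>j\<in>{j\<in>V. k < j}. f (min k j) (max k j)) + (\<Sum>j\<in>{j\<in>V. j < k}. f (min k j) (max k j))"
      using assms by (simp add: sum.union_disjoint disjoint_iff)
    also have "\<dots> = (\<Sum>j\<in>{j\<in>V. k < j}. f k j) + (\<Sum>j\<in>{j\<in>V. j < k}. f j k)"
      by (intro arg_cong2[where f="(+)"] sum.cong) auto
    finally show ?thesis .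
  qed
  have "(\<Sum>k\<in>V. \<Sum>j\<in>{j\<in>V. j < k}. f j k) = (\<Sum>j\<in>V. \<Sum>k\<in>{k\<in>V. j < k}. f j k)"
    using assms by (intro sum.swap_restrict) auto
  moreover have "(\<Sum>k\<in>V. \<Sum>j\<in>{j\<in>V. k < j}. f k j) = (\<Sum>(a, c)\<in>Sigma V (\<lambda>a. {c\<in>V. a < c}). f a c)"
    using assms by (intro sum.Sigma) auto
  ultimately show ?thesis using split by (simp add: sum.distrib)
qed


definition sampled :: "bool \<times> bool \<Rightarrow> bool" where
  "sampled v \<longleftrightarrow> fst v \<and> snd v"

locale sbm_constants =
  fixes b c1 c2 :: real
  assumes b_pos: "b > 0" and c1_pos: "c1 > 0" and c2_pos: "c2 > 0"
begin

text \<open>The \<open>ln 2\<close> term makes the truncation level \<open>T = C_deg log (L + n)\<close> of the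
  two-path count exceed \<open>2 b \<rho> p\<close>.\<close>
definition "C_deg = 6 + 4 * b * c2 / ln 2"
definition "C_deg_sum = 2 * b + 4 / c1"
definition "C_path = 8 * b * b * c2 + 4 * C_deg * c2 / (c1 * c1)"
definition "C_sbm = C_deg + C_deg_sum + C_path"

lemma C_deg_ge_6: "C_deg \<ge> 6"
  using b_pos c2_pos by (simp add: C_deg_def)

lemma C_deg_sum_pos: "C_deg_sum > 0"
  using b_pos c1_pos by (simp add: C_deg_sum_def add_pos_pos)

lemma C_path_pos: "C_path > 0"
  using b_pos c1_pos c2_pos C_deg_ge_6 unfolding C_path_def
  by (intro add_pos_pos mult_pos_pos divide_pos_pos) auto

lemma C_sbm_pos: "C_sbm > 0"
  using C_deg_ge_6 C_deg_sum_pos C_path_pos by (simp add: C_sbm_def)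

end

locale sbm_setup = sbm_constants b c1 c2 for b c1 c2 :: real +
  fixes K n L :: nat and p \<rho> :: real
    and g :: "nat \<Rightarrow> nat" and B0 :: "nat \<Rightarrow> nat \<Rightarrow> nat \<Rightarrow> real"
  assumes n_ge_1: "n \<ge> 1" and L_ge_1: "L \<ge> 1"
    and p_pos: "0 < p" and p_le_1: "p \<le> 1" and rho_pos: "0 < \<rho>"
    and g_lt_K: "\<forall>i<n. g i < K"
    and B0: "\<forall>l<L. \<forall>k<K. \<forall>k'<K. B0 l k k' = B0 l k' k \<and> 0 \<le> B0 l k k' \<and> B0 l k k' \<le> b
                          \<and> \<rho> * B0 l k k' \<le> 1"
    and rho_lower: "c1 * ln (real (L + n)) / (p * real n * sqrt (real L)) \<le> \<rho>"
    and rho_upper: "\<rho> \<le> c2 / (p * real n)"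
begin

definition "I = sbm_idx L n"
definition "Pc = (\<lambda>(l, i, j). pair_pmf (bernoulli_pmf (\<rho> * B0 l (g i) (g j))) (bernoulli_pmf p))"
abbreviation "sample \<equiv> Pi_pmf I (False, False) Pc"

definition "Q = b * \<rho> * p"
definition "ln_N = ln (real (L + n))"
definition "M = real L * real n * \<rho> * p"
definition "T = C_deg * ln_N"

definition ed :: "nat \<Rightarrow> nat \<Rightarrow> nat \<Rightarrow> nat \<times> nat \<times> nat" where
  "ed l i j = (l, min i j, max i j)"
definition V :: "nat \<Rightarrow> nat set" where
  "V i = {..<n} - {i}"
definition deg :: "nat \<Rightarrow> nat \<Rightarrow> (nat \<times> nat \<times> nat \<Rightarrow> bool \<times> bool) \<Rightarrow> real" where
  "deg l i \<omega> = (\<Sum>j\<in>V i. of_bool (sampled (\<omega> (ed l i j))))"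

lemma sbm_sparse_pmf_eq: "sbm_sparse_pmf L n g (\<lambda>l k k'. \<rho> * B0 l k k') p = sample"
  unfolding sbm_sparse_pmf_def I_def Pc_def ..

lemma I_subset: "I \<subseteq> {..<L} \<times> {..<n} \<times> {..<n}"
  by (auto simp: I_def sbm_idx_def)

lemma finite_I: "finite I"
  using I_subset by (rule finite_subset) auto

lemma card_I_le: "real (card I) \<le> real L * real n * real n"
proof -
  have "card I \<le> card ({..<L} \<times> {..<n} \<times> {..<n})"
    using I_subset by (intro card_mono) auto
  then show ?thesis by (simp add: card_cartesian_product flip: of_nat_mult)
qed

lemma ed_in_I: "l < L \<Longrightarrow> i < n \<Longrightarrow> j < n \<Longrightarrow> i \<noteq> j \<Longrightarrow> ed l i j \<in> I"
  by (auto simp: ed_def I_def sbm_idx_def min_def max_def)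

lemma ed_commute: "ed l i j = ed l j i"
  by (auto simp: ed_def min_def max_def)

lemma inj_on_ed: "inj_on (ed l i) X"
  by (auto simp: inj_on_def ed_def min_def max_def split: if_splits; arith)

lemma inj_on_ed_layers: "inj_on (\<lambda>(l, j). ed l i j) X"
  by (auto simp: inj_on_def ed_def min_def max_def split: if_splits; arith)

lemma finite_V: "finite (V i)"
  by (simp add: V_def)

lemma card_V_le: "card (V i) \<le> n"
  by (metis V_def Diff_subset card_lessThan card_mono finite_lessThan)

lemma prob_sampled_le:
  assumes "s \<in> I"
  shows "measure_pmf.prob (Pc s) {v. sampled v} \<le> Q"
proof -
  obtain l i j where s: "s = (l, i, j)" and l: "l < L" and ij: "i < j" and j: "j < n"
    using assms by (auto simp: I_def sbm_idx_def)
  define \<beta> where "\<beta> = \<rho> * B0 l (g i) (g j)"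
  have "g i < K" "g j < K" using g_lt_K ij j by auto
  then have \<beta>: "0 \<le> \<beta>" "\<beta> \<le> 1" "\<beta> \<le> \<rho> * b"
    using B0 l rho_pos by (auto simp: \<beta>_def intro: mult_left_mono)
  have "{v. sampled v} = {True} \<times> {True}"
    by (auto simp: sampled_def)
  then have "measure_pmf.prob (Pc s) {v. sampled v} = \<beta> * p"
    using \<beta> p_pos p_le_1
    by (simp add: s Pc_def \<beta>_def measure_pmf_single pmf_pair)
  also have "\<dots> \<le> Q"
    using \<beta> p_pos by (simp add: Q_def mult.commute[of b] mult_right_mono)
  finally show ?thesis .
qed

lemma sparse_adj_eq:
  "sparse_adj p \<omega> l i j = (if i = j then 0 else of_bool (sampled (\<omega> (ed l i j))) / p)"
  by (cases "\<omega> (ed l i j)") (auto simp: sparse_adj_def sampled_def ed_def)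

lemma sparse_deg_eq: "real (sparse_deg n p \<omega> l i) = deg l i \<omega>"
proof -
  have "{j. j < n \<and> sparse_adj p \<omega> l i j = 1 / p} = V i \<inter> {j. sampled (\<omega> (ed l i j))}"
    using p_pos by (auto simp: sparse_adj_eq V_def)
  then show ?thesis by (simp add: sparse_deg_def deg_def finite_V)
qed

lemma ln_N_pos: "ln_N > 0"
  using n_ge_1 L_ge_1 by (simp add: ln_N_def)

lemma exp_ln_N: "exp ln_N = real (L + n)"
  using n_ge_1 by (simp add: ln_N_def)

lemma Q_nonneg: "Q \<ge> 0"
  using b_pos rho_pos p_pos by (simp add: Q_def)

lemma M_nonneg: "M \<ge> 0"
  using rho_pos p_pos by (simp add: M_def)

lemma n_mult_Q_le: "real n * Q \<le> b * c2"
proof -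
  have "\<rho> * (p * real n) \<le> c2" using rho_upper p_pos n_ge_1 by (simp add: field_simps)
  then show ?thesis unfolding Q_def using b_pos by (simp add: mult_ac mult_left_mono)
qed

lemma Q_le: "Q \<le> b * c2"
  using n_mult_Q_le n_ge_1 Q_nonneg mult_le_cancel_right1[of Q "real n"] by auto

lemma Q_mult_L_n: "Q * real L * real n = b * M"
  by (simp add: Q_def M_def mult_ac)

lemma M_ge: "M \<ge> c1 * ln_N * sqrt (real L)"
proof -
  have pos: "p * real n * sqrt (real L) > 0" using p_pos n_ge_1 L_ge_1 by simp
  have "c1 * ln_N \<le> \<rho> * (p * real n * sqrt (real L))"
    using rho_lower pos by (simp add: ln_N_def field_simps)
  then have "c1 * ln_N * sqrt (real L) \<le> \<rho> * (p * real n * sqrt (real L)) * sqrt (real L)"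
    by (intro mult_right_mono) auto
  also have "\<dots> = M" by (simp add: M_def mult_ac)
  finally show ?thesis .
qed

lemma M_ge_ln_N: "M \<ge> c1 * ln_N"
proof -
  have "c1 * ln_N * 1 \<le> c1 * ln_N * sqrt (real L)"
    using c1_pos ln_N_pos L_ge_1 by (intro mult_left_mono) auto
  then show ?thesis using M_ge by simp
qed

text \<open>The two-sided hypothesis on \<open>\<rho>\<close> forces \<open>L\<close> to be large,
  \<open>c1 log (L + n) \<le> c2 sqrt L\<close>, hence \<open>M\<close> dominates \<open>log\<^sup>2 (L + n)\<close>.\<close>
lemma M_ge_ln_N_sq: "M \<ge> c1 * c1 * ln_N * ln_N / c2"
proof -
  have pos: "p * real n * sqrt (real L) > 0" using p_pos n_ge_1 L_ge_1 by simp
  have "c1 * ln_N / (p * real n * sqrt (real L)) \<le> c2 / (p * real n)"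
    using rho_lower rho_upper by (simp add: ln_N_def)
  then have "c1 * ln_N \<le> c2 / (p * real n) * (p * real n * sqrt (real L))"
    using pos by (simp add: field_simps)
  also have "\<dots> = c2 * sqrt (real L)" using p_pos n_ge_1 by (simp add: field_simps)
  finally have "c1 * ln_N * (c1 * ln_N) \<le> c2 * sqrt (real L) * (c1 * ln_N)"
    using c1_pos ln_N_pos by (intro mult_right_mono) auto
  also have "\<dots> \<le> c2 * M" using M_ge c2_pos by (simp add: mult_ac)
  finally show ?thesis using c2_pos by (simp add: field_simps)
qed

lemma T_pos: "T > 0"
  using C_deg_ge_6 ln_N_pos by (simp add: T_def)

lemma two_Q_le_T: "2 * Q \<le> T"
proof -
  have "4 * b * c2 / ln 2 * ln 2 \<le> C_deg * ln_N"
    using C_deg_ge_6 b_pos c2_pos n_ge_1 L_ge_1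
    by (intro mult_mono) (auto simp: C_deg_def ln_N_def)
  moreover have "b * c2 > 0" using b_pos c2_pos by simp
  ultimately show ?thesis using Q_le by (simp add: T_def)
qed

lemma deg_tail:
  assumes "l < L" "i < n"
  shows "measure_pmf.prob sample {\<omega>. a \<le> deg l i \<omega>} \<le> exp (- a / 2 + b * c2)"
proof -
  have "measure_pmf.prob sample {\<omega>. a \<le> deg l i \<omega>} \<le> exp (- a / 2 + Q * card (V i))"
    unfolding deg_def
    by (rule prob_sum_indicators_ge_le[OF finite_I finite_V inj_on_ed])
      (use assms prob_sampled_le in \<open>auto simp: V_def intro!: ed_in_I\<close>)
  also have "\<dots> \<le> exp (- a / 2 + b * c2)"
    using mult_left_mono[OF _ Q_nonneg, of "card (V i)" n] card_V_le n_mult_Q_le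
    by (simp add: mult.commute)
  finally show ?thesis .
qed

lemma deg_sum_tail:
  assumes "i < n"
  shows "measure_pmf.prob sample {\<omega>. a \<le> (\<Sum>l<L. deg l i \<omega>)} \<le> exp (- a / 2 + b * M)"
proof -
  have sum_eq: "(\<Sum>l<L. deg l i \<omega>)
      = (\<Sum>x\<in>{..<L} \<times> V i. of_bool (sampled (\<omega> (case x of (l, j) \<Rightarrow> ed l i j))))" for \<omega>
    by (simp add: deg_def sum.cartesian_product case_prod_unfold del: sum_of_bool_eq)
  have "measure_pmf.prob sample {\<omega>. a \<le> (\<Sum>l<L. deg l i \<omega>)}
      \<le> exp (- a / 2 + Q * card ({..<L} \<times> V i))"
    unfolding sum_eq
    by (rule prob_sum_indicators_ge_le[OF finite_I _ inj_on_ed_layers])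
      (use assms prob_sampled_le in \<open>auto simp: V_def intro!: ed_in_I\<close>)
  also have "\<dots> \<le> exp (- a / 2 + b * M)"
  proof -
    have "card ({..<L} \<times> V i) \<le> L * n" using card_V_le by (simp add: card_cartesian_product)
    then have "Q * card ({..<L} \<times> V i) \<le> Q * (real L * real n)"
      using Q_nonneg by (intro mult_left_mono) (auto simp flip: of_nat_mult)
    then show ?thesis using Q_mult_L_n by (simp add: mult_ac)
  qed
  finally show ?thesis .
qed

definition deg_avoiding :: "nat \<Rightarrow> nat \<Rightarrow> nat \<Rightarrow> (nat \<times> nat \<times> nat \<Rightarrow> bool \<times> bool) \<Rightarrow> real" where
  "deg_avoiding i l k \<omega> = (\<Sum>j\<in>V i - {k}. of_bool (sampled (\<omega> (ed l k j))))"

text \<open>Besides the degrees of \<open>i\<close>, row \<open>i\<close> of \<open>\<Sum>\<^sub>l A\<^sub>l\<^sup>2\<close> counts the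
  two-paths \<open>i - k - j\<close> with \<open>j \<noteq> i\<close>. Truncating the contribution of each middle vertex
  at \<open>T\<close> keeps the weights in the conditional MGF bound below 1, and is inactive on the
  event where all degrees stay below \<open>T\<close>.\<close>
definition two_paths :: "nat \<Rightarrow> (nat \<times> nat \<times> nat \<Rightarrow> bool \<times> bool) \<Rightarrow> real" where
  "two_paths i \<omega> =
     (\<Sum>l<L. \<Sum>k\<in>V i. of_bool (sampled (\<omega> (ed l i k))) * min (deg_avoiding i l k \<omega>) T)"

definition "star i = {s\<in>I. fst (snd s) = i \<or> snd (snd s) = i}"
definition "other_end i s = (if fst (snd s) = i then snd (snd s) else fst (snd s))"
definition "path_weight i s \<omega> = min (deg_avoiding i (fst s) (other_end i s) \<omega>) T"

lemma star_subset_I: "star i \<subseteq> I"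
  by (auto simp: star_def)

lemma bij_betw_star:
  assumes "i < n"
  shows "bij_betw (\<lambda>(l, k). ed l i k) ({..<L} \<times> V i) (star i)"
proof (rule bij_betw_imageI[OF inj_on_ed_layers], intro equalityI subsetI)
  fix s assume "s \<in> (\<lambda>(l, k). ed l i k) ` ({..<L} \<times> V i)"
  then show "s \<in> star i"
    using assms by (auto simp: star_def V_def ed_in_I) (auto simp: ed_def min_def max_def split: if_splits)
next
  fix s assume "s \<in> star i"
  then obtain l a c where s: "s = (l, a, c)" "l < L" "a < c" "c < n" "a = i \<or> c = i"
    by (auto simp: star_def I_def sbm_idx_def)
  then have "s = (if a = i then ed l i c else ed l i a)"
    by (auto simp: ed_def)
  moreover have "(l, if a = i then c else a) \<in> {..<L} \<times> V i"
    using s by (auto simp: V_def)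
  ultimately show "s \<in> (\<lambda>(l, k). ed l i k) ` ({..<L} \<times> V i)"
    by (auto intro!: image_eqI[where x="(l, if a = i then c else a)"])
qed

lemma sum_star_eq:
  assumes "i < n"
  shows "(\<Sum>s\<in>star i. h s) = (\<Sum>(l, k)\<in>{..<L} \<times> V i. h (ed l i k))"
  using sum.reindex_bij_betw[OF bij_betw_star[OF assms], of h] by (simp add: case_prod_beta)

lemma other_end_ed: "k \<noteq> i \<Longrightarrow> other_end i (ed l i k) = k"
  by (auto simp: other_end_def ed_def min_def max_def)

lemma path_weight_ed: "k \<in> V i \<Longrightarrow> path_weight i (ed l i k) \<omega> = min (deg_avoiding i l k \<omega>) T"
  by (simp add: path_weight_def other_end_ed V_def) (simp add: ed_def)

lemma two_paths_eq_sum_star: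
  assumes "i < n"
  shows "two_paths i \<omega> = (\<Sum>s\<in>star i. path_weight i s \<omega> * of_bool (sampled (\<omega> s)))"
proof -
  have "(\<Sum>s\<in>star i. path_weight i s \<omega> * of_bool (sampled (\<omega> s)))
      = (\<Sum>(l, k)\<in>{..<L} \<times> V i. of_bool (sampled (\<omega> (ed l i k))) * min (deg_avoiding i l k \<omega>) T)"
    unfolding sum_star_eq[OF assms]
    by (intro sum.cong) (auto simp: path_weight_ed simp del: sum_mult_of_bool_eq)
  then show ?thesis by (simp add: two_paths_def sum.cartesian_product)
qed

lemma path_weight_outside_star:
  assumes s: "s \<in> star i" and agree: "\<forall>x\<in>I - star i. \<omega> x = \<omega>' x"
  shows "path_weight i s \<omega> = path_weight i s \<omega>'"
proof -
  obtain l a c where s': "s = (l, a, c)" "l < L" "a < c" "c < n" "a = i \<or> c = i"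
    using s by (auto simp: star_def I_def sbm_idx_def)
  define k where "k = other_end i s"
  have k: "k \<noteq> i" "k < n" using s' by (auto simp: k_def other_end_def)
  have "\<omega> (ed l k j) = \<omega>' (ed l k j)" if "j \<in> V i - {k}" for j
  proof -
    have "ed l k j \<in> I" using that k s' by (intro ed_in_I) (auto simp: V_def)
    moreover have "ed l k j \<notin> star i" using that k by (auto simp: star_def ed_def V_def min_def max_def)
    ultimately show ?thesis using agree by auto
  qed
  then have "deg_avoiding i l k \<omega> = deg_avoiding i l k \<omega>'"
    unfolding deg_avoiding_def by (intro sum.cong) auto
  then show ?thesis by (simp add: path_weight_def k_def s')
qed

lemma sum_deg_avoiding_eq:
  "(\<Sum>l<L. \<Sum>k\<in>V i. deg_avoiding i l k \<omega>) = 2 * (\<Sum>s\<in>I - star i. of_bool (sampled (\<omega> s)))"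
proof -
  define Sig where "Sig = Sigma (V i) (\<lambda>a. {c\<in>V i. a < c})"
  have "I - star i = {..<L} \<times> Sig"
    by (auto simp: I_def sbm_idx_def star_def Sig_def V_def)
  then have I_star: "(\<Sum>s\<in>I - star i. of_bool (sampled (\<omega> s)))
      = (\<Sum>l<L. \<Sum>(a, c)\<in>Sig. of_bool (sampled (\<omega> (l, a, c))))"
    by (simp add: sum.cartesian_product case_prod_beta del: sum_of_bool_eq)
  have layer: "(\<Sum>k\<in>V i. deg_avoiding i l k \<omega>) = 2 * (\<Sum>(a, c)\<in>Sig. of_bool (sampled (\<omega> (l, a, c))))"
    for l unfolding deg_avoiding_def ed_def Sig_def
    by (rule sum_sum_min_max_eq_double[OF finite_V])
  show ?thesis
    by (simp only: layer I_star sum_distrib_left)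
qed

lemma two_paths_mgf_le:
  assumes i: "i < n" and t: "0 < t" "t * T \<le> 1" "4 * Q * t \<le> 1"
  shows "(\<integral>\<^sup>+\<omega>. ennreal (exp (t * two_paths i \<omega>)) \<partial>sample)
      \<le> ennreal (exp (8 * Q * Q * t * (real L * real n * real n)))"
proof -
  have pw: "0 \<le> path_weight i s \<omega> \<and> path_weight i s \<omega> \<le> T" for s \<omega>
    using T_pos by (auto simp: path_weight_def deg_avoiding_def intro!: sum_nonneg)
  have "(\<integral>\<^sup>+\<omega>. ennreal (exp (t * two_paths i \<omega>)) \<partial>sample)
      = (\<integral>\<^sup>+\<omega>. ennreal (exp (\<Sum>s\<in>star i. t * path_weight i s \<omega> * of_bool (sampled (\<omega> s)))) \<partial>sample)"
    by (simp add: two_paths_eq_sum_star[OF i] sum_distrib_left mult.assoc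
        del: sum_mult_of_bool_eq sum_of_bool_mult_eq)
  also have "\<dots> \<le> (\<integral>\<^sup>+\<omega>. ennreal (exp (2 * Q * (\<Sum>s\<in>star i. t * path_weight i s \<omega>))) \<partial>sample)"
  proof (rule nn_integral_exp_sum_Pi_pmf_cond_le[OF finite_I star_subset_I])
    show "t * path_weight i s \<omega> = t * path_weight i s \<omega>'"
      if "s \<in> star i" "\<forall>x\<in>I - star i. \<omega> x = \<omega>' x" for s \<omega> \<omega>'
      using path_weight_outside_star[OF that] by simp
    show "0 \<le> t * path_weight i s \<omega> \<and> t * path_weight i s \<omega> \<le> 1" for s \<omega>
    proof -
      have "t * path_weight i s \<omega> \<le> t * T" using pw t by (intro mult_left_mono) auto
      moreover have "0 \<le> t * path_weight i s \<omega>" using pw t by simp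
      ultimately show ?thesis using t by linarith
    qed
  qed (rule prob_sampled_le)
  also have "\<dots> \<le> (\<integral>\<^sup>+\<omega>. ennreal (exp (\<Sum>s\<in>I - star i. 4 * Q * t * of_bool (sampled (\<omega> s)))) \<partial>sample)"
  proof (intro nn_integral_mono ennreal_leI exp_mono)
    fix \<omega>
    have "(\<Sum>s\<in>star i. path_weight i s \<omega>) \<le> (\<Sum>(l, k)\<in>{..<L} \<times> V i. deg_avoiding i l k \<omega>)"
      unfolding sum_star_eq[OF i] by (intro sum_mono) (auto simp: path_weight_ed)
    also have "\<dots> = 2 * (\<Sum>s\<in>I - star i. of_bool (sampled (\<omega> s)))"
      by (simp add: sum.cartesian_product[symmetric] sum_deg_avoiding_eq del: sum_of_bool_eq)
    finally have "2 * Q * (t * (\<Sum>s\<in>star i. path_weight i s \<omega>))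
        \<le> 2 * Q * (t * (2 * (\<Sum>s\<in>I - star i. of_bool (sampled (\<omega> s)))))"
      using Q_nonneg t by (intro mult_left_mono) auto
    then show "2 * Q * (\<Sum>s\<in>star i. t * path_weight i s \<omega>)
        \<le> (\<Sum>s\<in>I - star i. 4 * Q * t * of_bool (sampled (\<omega> s)))"
      by (simp add: sum_distrib_left mult_ac del: sum_of_bool_eq sum_mult_of_bool_eq)
  qed
  also have "\<dots> \<le> ennreal (exp (2 * Q * (\<Sum>s\<in>I - star i. 4 * Q * t)))"
    by (rule nn_integral_exp_sum_Pi_pmf_reindex_le[OF finite_I _ inj_on_id2])
      (use finite_I t Q_nonneg prob_sampled_le in auto)
  also have "\<dots> \<le> ennreal (exp (8 * Q * Q * t * (real L * real n * real n)))"
  proof (intro ennreal_leI exp_mono)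
    have "real (card (I - star i)) \<le> real L * real n * real n"
      using card_I_le card_mono[OF finite_I, of "I - star i"] by force
    then have "8 * Q * Q * t * real (card (I - star i)) \<le> 8 * Q * Q * t * (real L * real n * real n)"
      using Q_nonneg t by (intro mult_left_mono) auto
    then show "2 * Q * (\<Sum>s\<in>I - star i. 4 * Q * t) \<le> 8 * Q * Q * t * (real L * real n * real n)"
      by (simp add: mult_ac)
  qed
  finally show ?thesis .
qed

lemma two_paths_tail:
  assumes "i < n"
  shows "measure_pmf.prob sample {\<omega>. a \<le> two_paths i \<omega>}
      \<le> exp (- a / (2 * T) + 4 * Q * Q * (real L * real n * real n) / T)"
proof -
  define t where "t = 1 / (2 * T)"
  have t: "0 < t" "t * T \<le> 1" "4 * Q * t \<le> 1"
    using T_pos two_Q_le_T by (auto simp: t_def field_simps)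
  have sets: "{\<omega>. a \<le> two_paths i \<omega>} = {\<omega>. t * a \<le> t * two_paths i \<omega>}"
    using t by (simp add: mult_le_cancel_left_pos)
  have "measure_pmf.prob sample {\<omega>. a \<le> two_paths i \<omega>}
      \<le> exp (- (t * a)) * exp (8 * Q * Q * t * (real L * real n * real n))"
    unfolding sets by (rule prob_ge_le_exp_nn_integral[OF two_paths_mgf_le[OF assms t]]) simp
  also have "\<dots> = exp (- (t * a) + 8 * Q * Q * t * (real L * real n * real n))"
    by (rule exp_add[symmetric])
  also have "- (t * a) + 8 * Q * Q * t * (real L * real n * real n)
      = - a / (2 * T) + 4 * Q * Q * (real L * real n * real n) / T"
    using T_pos by (simp add: t_def field_simps)
  finally show ?thesis .
qed

lemma real_n_le_exp_ln_N: "real n \<le> exp ln_N"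
  by (simp add: exp_ln_N)

lemma real_L_le_exp_ln_N: "real L \<le> exp ln_N"
  by (simp add: exp_ln_N)

lemma prob_deg_large_le:
  "measure_pmf.prob sample {\<omega>. \<exists>l<L. \<exists>i<n. T \<le> deg l i \<omega>} \<le> exp (b * c2) * exp (- ln_N)"
proof -
  have "{\<omega>. \<exists>l<L. \<exists>i<n. T \<le> deg l i \<omega>} = (\<Union>x\<in>{..<L} \<times> {..<n}. {\<omega>. T \<le> deg (fst x) (snd x) \<omega>})"
    by force
  also have "measure_pmf.prob sample \<dots> \<le> card ({..<L} \<times> {..<n}) * exp (- 3 * ln_N + b * c2)"
  proof (rule measure_pmf_UN_le_card_mult)
    fix x assume "x \<in> {..<L} \<times> {..<n}"
    then have "measure_pmf.prob sample {\<omega>. T \<le> deg (fst x) (snd x) \<omega>} \<le> exp (- T / 2 + b * c2)"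
      by (intro deg_tail) auto
    also have "\<dots> \<le> exp (- 3 * ln_N + b * c2)"
      using C_deg_ge_6 ln_N_pos by (simp add: T_def mult_right_mono)
    finally show "measure_pmf.prob sample {\<omega>. T \<le> deg (fst x) (snd x) \<omega>} \<le> exp (- 3 * ln_N + b * c2)" .
  qed simp
  also have "\<dots> \<le> exp ln_N * exp ln_N * exp (- 3 * ln_N + b * c2)"
    using real_L_le_exp_ln_N real_n_le_exp_ln_N
    by (intro mult_right_mono) (auto simp: card_cartesian_product intro: mult_mono)
  also have "\<dots> = exp (b * c2) * exp (- ln_N)"
    by (simp add: exp_add[symmetric])
  finally show ?thesis .
qed

lemma prob_deg_sum_large_le:
  "measure_pmf.prob sample {\<omega>. \<exists>i<n. C_deg_sum * M \<le> (\<Sum>l<L. deg l i \<omega>)} \<le> exp (- ln_N)"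
proof -
  have "{\<omega>. \<exists>i<n. C_deg_sum * M \<le> (\<Sum>l<L. deg l i \<omega>)} = (\<Union>i\<in>{..<n}. {\<omega>. C_deg_sum * M \<le> (\<Sum>l<L. deg l i \<omega>)})"
    by blast
  also have "measure_pmf.prob sample \<dots> \<le> card {..<n} * exp (- 2 * ln_N)"
  proof (rule measure_pmf_UN_le_card_mult)
    fix i assume "i \<in> {..<n}"
    then have "measure_pmf.prob sample {\<omega>. C_deg_sum * M \<le> (\<Sum>l<L. deg l i \<omega>)}
        \<le> exp (- (C_deg_sum * M) / 2 + b * M)"
      by (intro deg_sum_tail) auto
    also have "- (C_deg_sum * M) / 2 + b * M = - (2 / c1) * M"
      by (simp add: C_deg_sum_def field_simps)
    also have "\<dots> \<le> - (2 / c1) * (c1 * ln_N)"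
      using M_ge_ln_N c1_pos by (intro mult_left_mono_neg) auto
    finally show "measure_pmf.prob sample {\<omega>. C_deg_sum * M \<le> (\<Sum>l<L. deg l i \<omega>)} \<le> exp (- 2 * ln_N)"
      using c1_pos by simp
  qed simp
  also have "\<dots> \<le> exp ln_N * exp (- 2 * ln_N)"
    using real_n_le_exp_ln_N by (intro mult_right_mono) auto
  also have "\<dots> = exp (- ln_N)"
    by (simp add: exp_add[symmetric])
  finally show ?thesis .
qed

lemma two_paths_tail_exponent_le:
  "- (C_path * M) / (2 * T) + 4 * Q * Q * (real L * real n * real n) / T \<le> - 2 * ln_N"
proof -
  have "Q * Q * (real L * real n * real n) = (real n * Q) * (Q * real L * real n)"
    by (simp add: mult_ac)
  also have "\<dots> \<le> b * c2 * (b * M)"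
    unfolding Q_mult_L_n using n_mult_Q_le M_nonneg b_pos by (intro mult_right_mono) auto
  finally have "- (C_path * M) + 8 * (Q * Q * (real L * real n * real n))
      \<le> - (4 * C_deg * c2 / (c1 * c1)) * M"
    by (simp add: C_path_def algebra_simps)
  also have "\<dots> \<le> - (4 * C_deg * c2 / (c1 * c1)) * (c1 * c1 * ln_N * ln_N / c2)"
    using M_ge_ln_N_sq C_deg_ge_6 c1_pos c2_pos by (intro mult_left_mono_neg) auto
  also have "\<dots> = - 2 * ln_N * (2 * T)"
    using c1_pos c2_pos by (simp add: T_def field_simps)
  finally show ?thesis
    using T_pos by (simp add: field_simps)
qed

lemma prob_two_paths_large_le:
  "measure_pmf.prob sample {\<omega>. \<exists>i<n. C_path * M \<le> two_paths i \<omega>} \<le> exp (- ln_N)"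
proof -
  have "{\<omega>. \<exists>i<n. C_path * M \<le> two_paths i \<omega>} = (\<Union>i\<in>{..<n}. {\<omega>. C_path * M \<le> two_paths i \<omega>})"
    by blast
  also have "measure_pmf.prob sample \<dots> \<le> card {..<n} * exp (- 2 * ln_N)"
  proof (rule measure_pmf_UN_le_card_mult)
    fix i assume "i \<in> {..<n}"
    then have "measure_pmf.prob sample {\<omega>. C_path * M \<le> two_paths i \<omega>}
        \<le> exp (- (C_path * M) / (2 * T) + 4 * Q * Q * (real L * real n * real n) / T)"
      by (intro two_paths_tail) auto
    also have "\<dots> \<le> exp (- 2 * ln_N)"
      using two_paths_tail_exponent_le by simp
    finally show "measure_pmf.prob sample {\<omega>. C_path * M \<le> two_paths i \<omega>} \<le> exp (- 2 * ln_N)" .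
  qed simp
  also have "\<dots> \<le> exp ln_N * exp (- 2 * ln_N)"
    using real_n_le_exp_ln_N by (intro mult_right_mono) auto
  also have "\<dots> = exp (- ln_N)"
    by (simp add: exp_add[symmetric])
  finally show ?thesis .
qed

abbreviation sum_sq_adj :: "(nat \<times> nat \<times> nat \<Rightarrow> bool \<times> bool) \<Rightarrow> nat \<Rightarrow> nat \<Rightarrow> real" where
  "sum_sq_adj \<omega> \<equiv> (\<lambda>i j. \<Sum>l<L. mat_mult_n n (sparse_adj p \<omega> l) (sparse_adj p \<omega> l) i j)"

lemma row_sum_sparse_adj: "(\<Sum>j<n. sparse_adj p \<omega> l k j) = deg l k \<omega> / p"
proof -
  have "(\<Sum>j<n. sparse_adj p \<omega> l k j) = (\<Sum>j\<in>V k. sparse_adj p \<omega> l k j)"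
    by (intro sum.mono_neutral_right) (auto simp: V_def sparse_adj_eq)
  also have "\<dots> = deg l k \<omega> / p"
    by (simp add: V_def sparse_adj_eq deg_def sum_divide_distrib del: sum_of_bool_eq)
  finally show ?thesis .
qed

lemma deg_eq_edge_plus_deg_avoiding:
  assumes "i < n" "k \<in> V i"
  shows "deg l k \<omega> = of_bool (sampled (\<omega> (ed l i k))) + deg_avoiding i l k \<omega>"
proof -
  have "V k = insert i (V i - {k})" and "i \<notin> V i - {k}"
    using assms by (auto simp: V_def)
  then show ?thesis
    by (simp add: deg_def deg_avoiding_def finite_V ed_commute del: sum_of_bool_eq)
qed

lemma deg_avoiding_le_deg: "k \<in> V i \<Longrightarrow> deg_avoiding i l k \<omega> \<le> deg l k \<omega>"
  unfolding deg_avoiding_def deg_def by (intro sum_mono2 finite_V) (auto simp: V_def)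

text \<open>Since \<open>A\<^sub>l\<^sup>2\<close> has row sums \<open>\<Sum>\<^sub>k A\<^sub>l\<^sub>i\<^sub>k d\<^sub>l\<^sub>k\<close> and
  \<open>d\<^sub>l\<^sub>k = A\<^sub>l\<^sub>i\<^sub>k + deg_avoiding i l k\<close>, the row sums of \<open>\<Sum>\<^sub>l A\<^sub>l\<^sup>2\<close>
  split into the degrees of \<open>i\<close> and the two-paths from \<open>i\<close>.\<close>
lemma row_sum_sum_sq_adj_eq:
  assumes i: "i < n" and deg: "\<forall>l<L. \<forall>k<n. deg l k \<omega> \<le> T"
  shows "(\<Sum>j<n. sum_sq_adj \<omega> i j) = ((\<Sum>l<L. deg l i \<omega>) + two_paths i \<omega>) / p\<^sup>2"
proof -
  have layer: "(\<Sum>j<n. mat_mult_n n (sparse_adj p \<omega> l) (sparse_adj p \<omega> l) i j)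
      = (deg l i \<omega> + (\<Sum>k\<in>V i. of_bool (sampled (\<omega> (ed l i k))) * min (deg_avoiding i l k \<omega>) T)) / p\<^sup>2"
    if l: "l < L" for l
  proof -
    have "(\<Sum>j<n. mat_mult_n n (sparse_adj p \<omega> l) (sparse_adj p \<omega> l) i j)
        = (\<Sum>k<n. sparse_adj p \<omega> l i k * (deg l k \<omega> / p))"
      unfolding mat_mult_n_def
      by (subst sum.swap) (simp add: sum_distrib_left[symmetric] row_sum_sparse_adj)
    also have "\<dots> = (\<Sum>k\<in>V i. of_bool (sampled (\<omega> (ed l i k))) * deg l k \<omega> / p\<^sup>2)"
      by (intro sum.mono_neutral_cong_right)
        (auto simp: V_def sparse_adj_eq power2_eq_square simp del: sum_of_bool_mult_eq)
    also have "\<dots> = (\<Sum>k\<in>V i. (of_bool (sampled (\<omega> (ed l i k)))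
        + of_bool (sampled (\<omega> (ed l i k))) * min (deg_avoiding i l k \<omega>) T) / p\<^sup>2)"
    proof (intro sum.cong refl)
      fix k assume k: "k \<in> V i"
      have "deg_avoiding i l k \<omega> \<le> T"
        using deg_avoiding_le_deg[OF k, of l \<omega>] deg l k by (force simp: V_def)
      then show "of_bool (sampled (\<omega> (ed l i k))) * deg l k \<omega> / p\<^sup>2 = (of_bool (sampled (\<omega> (ed l i k)))
          + of_bool (sampled (\<omega> (ed l i k))) * min (deg_avoiding i l k \<omega>) T) / p\<^sup>2"
        by (simp add: deg_eq_edge_plus_deg_avoiding[OF i k] distrib_left min_def)
    qed
    also have "\<dots> = (deg l i \<omega> + (\<Sum>k\<in>V i. of_bool (sampled (\<omega> (ed l i k))) * min (deg_avoiding i l k \<omega>) T)) / p\<^sup>2"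
      by (simp add: deg_def sum_divide_distrib[symmetric] sum.distrib
          del: sum_of_bool_eq sum_of_bool_mult_eq)
    finally show ?thesis .
  qed
  have "(\<Sum>j<n. sum_sq_adj \<omega> i j) = (\<Sum>l<L. \<Sum>j<n. mat_mult_n n (sparse_adj p \<omega> l) (sparse_adj p \<omega> l) i j)"
    by (rule sum.swap)
  also have "\<dots> = ((\<Sum>l<L. deg l i \<omega>) + two_paths i \<omega>) / p\<^sup>2"
    by (simp add: layer two_paths_def sum_divide_distrib[symmetric] sum.distrib
        del: sum_of_bool_mult_eq)
  finally show ?thesis .
qed

lemma spec_norm_sum_sq_adj_le:
  assumes deg: "\<forall>l<L. \<forall>k<n. deg l k \<omega> \<le> T"
    and rows: "\<And>i. i < n \<Longrightarrow> (\<Sum>l<L. deg l i \<omega>) + two_paths i \<omega> \<le> R" and R: "0 \<le> R"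
  shows "spec_norm n (sum_sq_adj \<omega>) \<le> R / p\<^sup>2"
proof (rule spec_norm_le_row_sum)
  have "sparse_adj p \<omega> l a c = sparse_adj p \<omega> l c a" for l a c
    by (simp add: sparse_adj_eq ed_commute)
  then show "sum_sq_adj \<omega> i j = sum_sq_adj \<omega> j i" for i j
    unfolding mat_mult_n_def by (intro sum.cong refl) (simp add: mult.commute)
  fix i assume i: "i < n"
  have "0 \<le> sum_sq_adj \<omega> i j" for j
    unfolding mat_mult_n_def using p_pos
    by (intro sum_nonneg mult_nonneg_nonneg) (auto simp: sparse_adj_eq)
  then have "(\<Sum>j<n. \<bar>sum_sq_adj \<omega> i j\<bar>) = ((\<Sum>l<L. deg l i \<omega>) + two_paths i \<omega>) / p\<^sup>2"
    using row_sum_sum_sq_adj_eq[OF i deg] by simp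
  also have "\<dots> \<le> R / p\<^sup>2"
    using rows[OF i] by (simp add: divide_right_mono)
  finally show "(\<Sum>j<n. \<bar>sum_sq_adj \<omega> i j\<bar>) \<le> R / p\<^sup>2" .
qed (use R in simp)

lemma bounds_imp_good:
  assumes deg: "\<forall>l<L. \<forall>i<n. deg l i \<omega> < T"
    and deg_sum: "\<forall>i<n. (\<Sum>l<L. deg l i \<omega>) < C_deg_sum * M"
    and paths: "\<forall>i<n. two_paths i \<omega> < C_path * M"
  shows "(\<forall>l<L. \<forall>i<n. real (sparse_deg n p \<omega> l i) \<le> C_sbm * ln (real (L + n)))
    \<and> (\<forall>i<n. (\<Sum>l<L. real (sparse_deg n p \<omega> l i)) \<le> C_sbm * real L * real n * \<rho> * p)
    \<and> spec_norm n (sum_sq_adj \<omega>) \<le> C_sbm * real L * real n * \<rho> / p"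
proof (intro conjI allI impI)
  fix l i assume "l < L" "i < n"
  then have "deg l i \<omega> \<le> C_deg * ln_N" using deg by (force simp: T_def)
  also have "\<dots> \<le> C_sbm * ln_N"
    using ln_N_pos C_deg_sum_pos C_path_pos by (intro mult_right_mono) (auto simp: C_sbm_def)
  finally show "real (sparse_deg n p \<omega> l i) \<le> C_sbm * ln (real (L + n))"
    by (simp add: sparse_deg_eq ln_N_def)
next
  fix i assume "i < n"
  then have "(\<Sum>l<L. deg l i \<omega>) \<le> C_deg_sum * M" using deg_sum by force
  also have "\<dots> \<le> C_sbm * M"
    using M_nonneg C_deg_ge_6 C_path_pos by (intro mult_right_mono) (auto simp: C_sbm_def)
  finally show "(\<Sum>l<L. real (sparse_deg n p \<omega> l i)) \<le> C_sbm * real L * real n * \<rho> * p"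
    by (simp add: sparse_deg_eq M_def mult_ac)
next
  have "spec_norm n (sum_sq_adj \<omega>) \<le> C_sbm * M / p\<^sup>2"
  proof (rule spec_norm_sum_sq_adj_le)
    show "\<forall>l<L. \<forall>k<n. deg l k \<omega> \<le> T" using deg by (auto intro: less_imp_le)
    show "(\<Sum>l<L. deg l i \<omega>) + two_paths i \<omega> \<le> C_sbm * M" if "i < n" for i
      using deg_sum paths that M_nonneg C_deg_ge_6
      by (fastforce simp: C_sbm_def algebra_simps intro: add_increasing)
    show "0 \<le> C_sbm * M" using C_sbm_pos M_nonneg by simp
  qed
  also have "\<dots> = C_sbm * real L * real n * \<rho> / p"
    using p_pos by (simp add: M_def power2_eq_square)
  finally show "spec_norm n (sum_sq_adj \<omega>) \<le> C_sbm * real L * real n * \<rho> / p" .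
qed

lemma prob_good_ge:
  "measure_pmf.prob (sbm_sparse_pmf L n g (\<lambda>l k k'. \<rho> * B0 l k k') p)
     {\<omega>. (\<forall>l<L. \<forall>i<n. real (sparse_deg n p \<omega> l i) \<le> C_sbm * ln (real (L + n)))
        \<and> (\<forall>i<n. (\<Sum>l<L. real (sparse_deg n p \<omega> l i)) \<le> C_sbm * real L * real n * \<rho> * p)
        \<and> spec_norm n (sum_sq_adj \<omega>) \<le> C_sbm * real L * real n * \<rho> / p}
   \<ge> 1 - (exp (b * c2) + 2) * real (L + n) powr - 1"
  (is "measure_pmf.prob _ ?good \<ge> _")
proof -
  define bad where "bad = {\<omega>. \<exists>l<L. \<exists>i<n. T \<le> deg l i \<omega>}
    \<union> {\<omega>. \<exists>i<n. C_deg_sum * M \<le> (\<Sum>l<L. deg l i \<omega>)} \<union> {\<omega>. \<exists>i<n. C_path * M \<le> two_paths i \<omega>}"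
  have "UNIV - ?good \<subseteq> bad"
    using bounds_imp_good by (force simp: bad_def not_le)
  then have "measure_pmf.prob sample (UNIV - ?good) \<le> measure_pmf.prob sample bad"
    by (rule measure_pmf.finite_measure_mono) simp
  moreover have "measure_pmf.prob sample (UNIV - ?good) = 1 - measure_pmf.prob sample ?good"
    using measure_pmf.prob_compl[of ?good sample] by simp
  ultimately have "1 - measure_pmf.prob sample ?good \<le> measure_pmf.prob sample bad"
    by simp
  also have "\<dots> \<le> measure_pmf.prob sample {\<omega>. \<exists>l<L. \<exists>i<n. T \<le> deg l i \<omega>}
      + measure_pmf.prob sample {\<omega>. \<exists>i<n. C_deg_sum * M \<le> (\<Sum>l<L. deg l i \<omega>)}
      + measure_pmf.prob sample {\<omega>. \<exists>i<n. C_path * M \<le> two_paths i \<omega>}"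
    unfolding bad_def by (rule order.trans[OF measure_Un_le add_right_mono[OF measure_Un_le]]) auto
  also have "\<dots> \<le> exp (b * c2) * exp (- ln_N) + exp (- ln_N) + exp (- ln_N)"
    using prob_deg_large_le prob_deg_sum_large_le prob_two_paths_large_le by (intro add_mono)
  also have "\<dots> = (exp (b * c2) + 2) * real (L + n) powr - 1"
    using n_ge_1 by (simp add: powr_def ln_N_def algebra_simps)
  finally show ?thesis by (simp add: sbm_sparse_pmf_eq)
qed

end

theorem lemma1:
  fixes K :: nat and b c1 c2 :: real
  assumes "K \<ge> 1" and "b > 0" and "c1 > 0" and "c2 > 0"
  shows "\<exists>C c C'. C > 0 \<and> c > 0 \<and> C' > 0 \<and>
    (\<forall>(n::nat) (L::nat) (p::real) (\<rho>::real) (g::nat \<Rightarrow> nat) (B0::nat \<Rightarrow> nat \<Rightarrow> nat \<Rightarrow> real).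
      n \<ge> 1 \<longrightarrow> L \<ge> 1 \<longrightarrow> 0 < p \<longrightarrow> p \<le> 1 \<longrightarrow> 0 < \<rho> \<longrightarrow>
      (\<forall>i<n. g i < K) \<longrightarrow>
      (\<forall>l<L. \<forall>k<K. \<forall>k'<K. B0 l k k' = B0 l k' k \<and> 0 \<le> B0 l k k' \<and> B0 l k k' \<le> b
                          \<and> \<rho> * B0 l k k' \<le> 1) \<longrightarrow>
      c1 * ln (real (L + n)) / (p * real n * sqrt (real L)) \<le> \<rho> \<longrightarrow>
      \<rho> \<le> c2 / (p * real n) \<longrightarrow>
      measure_pmf.prob (sbm_sparse_pmf L n g (\<lambda>l k k'. \<rho> * B0 l k k') p)
        {\<omega>. (\<forall>l<L. \<forall>i<n. real (sparse_deg n p \<omega> l i) \<le> C * ln (real (L + n)))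
           \<and> (\<forall>i<n. (\<Sum>l<L. real (sparse_deg n p \<omega> l i)) \<le> C * real L * real n * \<rho> * p)
           \<and> spec_norm n (\<lambda>i j. \<Sum>l<L. mat_mult_n n (sparse_adj p \<omega> l) (sparse_adj p \<omega> l) i j)
               \<le> C * real L * real n * \<rho> / p}
        \<ge> 1 - C' * (real (L + n)) powr (- c))"
proof -
  have constants: "sbm_constants b c1 c2"
    using assms by unfold_locales auto
  interpret sbm_constants b c1 c2
    by (fact constants)
  show ?thesis
  proof (rule exI[of _ C_sbm], rule exI[of _ 1], rule exI[of _ "exp (b * c2) + 2"],
      intro conjI allI impI sbm_setup.prob_good_ge sbm_setup.intro[OF constants]
      sbm_setup_axioms.intro)
  qed (use C_sbm_pos in \<open>auto intro: add_pos_pos\<close>)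
qed

end
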